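(* Let $m,d_1,d_2$ be positive integers, $\bm{B}\in\mathbb{C}^{m\times d_1}$, $\bm{A}\in\mathbb{C}^{m\times d_2}$ and $\bm{y}\in\mathbb{C}^m$. For $j=1,\dots,m$ let $\bm{b}_j\in\mathbb{C}^{d_1}$ and $\bm{a}_j\in\mathbb{C}^{d_2}$ be the $j$-th columns of $\bm{B}^{\mathsf H}$ and $\bm{A}^{\mathsf H}$ respectively. Define $F_1:\mathbb{R}^{d_1}\times\mathbb{R}^{d_2}\to\mathbb{R}$ by $$F_1(\bm{h},\bm{x})=\frac14\|\bm{Bh}\|_4^4+\frac14\|\bm{Ax}\|_4^4+\frac12\Big(\|\bm{Bh}\odot\bm{Ax}\|_2^2+\|\bm{y}\odot\bm{Bh}\|_2^2+\|\bm{Ax}\|_2^2+\|\bm{y}\|_2^2\Big),$$ and $H:\mathbb{R}^{d_1}\times\mathbb{R}^{d_2}\to\mathbb{R}$ by $$H(\bm{h},\bm{x})=\frac14\big(\|\bm{h}\|_2^2+\|\bm{x}\|_2^2\big)^2+\frac12\big(\|\bm{h}\|_2^2+\|\bm{x}\|_2^2\big).$$ Then for every real $L$ satisfying $$L\ \ge\ \sum_{j=1}^m\Big(3\|\bm{b}_j\|_2^4+3\|\bm{a}_j\|_2^4+\|\bm{b}_j\|_2^2\|\bm{a}_j\|_2^2+|y_j|^2\|\bm{b}_j\|_2^2+\|\bm{a}_j\|_2^2\Big),$$ the function $LH-F_1$ is convex on $\mathbb{R}^{d_1+d_2}$.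
   Context: $\odot$ denotes the elementwise (Hadamard) product of vectors in $\mathbb{C}^m$; for $\bm{w}\in\mathbb{C}^m$, $\|\bm{w}\|_2^2=\sum_j|w_j|^2$ and $\|\bm{w}\|_4^4=\sum_j|w_j|^4$. $\bm{B}^{\mathsf H}$ is the conjugate transpose, so $(\bm{Bh})_j=\bm{b}_j^{\mathsf H}\bm{h}$ and $(\bm{Ax})_j=\bm{a}_j^{\mathsf H}\bm{x}$. The variables $\bm{h},\bm{x}$ are real vectors, and $(\bm{h},\bm{x})$ is identified with a vector of $\mathbb{R}^{d_1+d_2}$. *)

theory Defs
  imports "HOL-Analysis.Analysis"
begin

definition cvec :: "real^'n \<Rightarrow> complex^'n" where
  "cvec h = (\<chi> i. complex_of_real (h $ i))"

text \<open>The matrix B in C^(m x d1) is  complex^'d1^'m  (row j is  B $ j, i.e. conj b_j);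
  (B h)_j = b_j^H h = (B *v h) $ j.\<close>

definition F1 :: "complex^'d1^'m \<Rightarrow> complex^'d2^'m \<Rightarrow> complex^'m \<Rightarrow>
    ((real^'d1) \<times> (real^'d2)) \<Rightarrow> real" where
  "F1 B A y z =
     (let Bh = B *v cvec (fst z); Ax = A *v cvec (snd z) in
     (1/4) * (\<Sum>j\<in>UNIV. cmod (Bh $ j) ^ 4)
   + (1/4) * (\<Sum>j\<in>UNIV. cmod (Ax $ j) ^ 4)
   + (1/2) * ((\<Sum>j\<in>UNIV. cmod (Bh $ j * Ax $ j) ^ 2)
            + (\<Sum>j\<in>UNIV. cmod (y $ j * Bh $ j) ^ 2)
            + (\<Sum>j\<in>UNIV. cmod (Ax $ j) ^ 2)
            + (\<Sum>j\<in>UNIV. cmod (y $ j) ^ 2)))"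

definition Hfun :: "((real^'d1) \<times> (real^'d2)) \<Rightarrow> real" where
  "Hfun z = (1/4) * (norm (fst z) ^ 2 + norm (snd z) ^ 2) ^ 2
             + (1/2) * (norm (fst z) ^ 2 + norm (snd z) ^ 2)"

end

(*
  Write F1 = \<Sum>j f_j, where f_j depends on (h, x) only through u = |b_j^H h|^2 and
  v = |a_j^H x|^2. It suffices that H is convex and that c_j H - f_j is convex for every j,
  where c_j is the j-th summand of the bound on L. Convexity is checked along lines: there
  u, v, ||h||^2 and ||x||^2 are nonnegative quadratics in t, so the second derivative of
  c_j H - f_j is a polynomial in their coefficients. Cauchy-Schwarz bounds u by ||b_j||^2 ||h||^2
  (and likewise the leading coefficients and v), and an AM-GM step absorbs the cross term u'v'.
*)
theory Submission
  imports Defs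
begin

definition H_profile :: "real \<Rightarrow> real" where
  "H_profile q = (1/4) * q^2 + (1/2) * q"

definition F1_summand :: "real \<Rightarrow> real \<Rightarrow> real \<Rightarrow> real" where
  "F1_summand Y u v = (1/4) * u^2 + (1/4) * v^2 + (1/2) * (u * v + Y * u + v + Y)"

lemma power2_norm_line:
  fixes a b :: "'a::real_inner"
  shows "norm (a + t *\<^sub>R b)^2 = norm a^2 + 2 * t * inner a b + t^2 * norm b^2"
  unfolding power2_norm_eq_inner
  by (simp add: inner_add_left inner_add_right inner_commute algebra_simps power2_eq_square)

lemma has_real_derivative_norm_line:
  fixes a b :: "'a::real_inner"
  shows "((\<lambda>t. norm (a + t *\<^sub>R b)^2) has_real_derivative 2 * inner (a + t *\<^sub>R b) b) (at t)"
  unfolding power2_norm_line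
  by (rule derivative_eq_intros refl | simp add: inner_add_left algebra_simps power2_norm_eq_inner)+

lemma has_real_derivative_inner_line:
  fixes a b :: "'a::real_inner"
  shows "((\<lambda>t. inner (a + t *\<^sub>R b) b) has_real_derivative norm b^2) (at t)"
  unfolding inner_add_left
  by (rule derivative_eq_intros refl | simp add: power2_norm_eq_inner)+

lemma two_mul_le_add_of_square_le:
  fixes s a b :: real
  assumes "s^2 \<le> a * b" "0 \<le> a" "0 \<le> b"
  shows "2 * s \<le> a + b"
proof -
  have "(2 * s)^2 \<le> (a + b)^2"
  proof -
    have "(2 * s)^2 = 4 * s^2" by (simp add: power_mult_distrib)
    also have "\<dots> \<le> 4 * (a * b)" using assms(1) by simp
    also have "\<dots> \<le> (a + b)^2" using sum_squares_ge_zero[of "a - b" 0]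
      by (simp add: power2_eq_square algebra_simps)
    finally show ?thesis .
  qed
  then show ?thesis by (rule power2_le_imp_le) (use assms in simp)
qed

lemma hessian_coefficient_bound:
  fixes p0 p2 r0 r2 Y \<alpha> \<beta> :: real
  assumes "0 \<le> p0" "0 \<le> p2" "0 \<le> r0" "0 \<le> r2" "0 \<le> Y" "0 \<le> \<alpha>" "0 \<le> \<beta>"
  shows "3 * \<beta>^2 * (p0 * p2) + 3 * \<alpha>^2 * (r0 * r2) + 2 * \<beta>^2 * (r0 * r2) + 2 * \<alpha>^2 * (p0 * p2)
      + \<alpha> * \<beta> * (p2 * r0 + p0 * r2) + Y * \<beta> * p2 + \<alpha> * r2
    \<le> (3 * \<beta>^2 + 3 * \<alpha>^2 + \<alpha> * \<beta> + Y * \<beta> + \<alpha>) * ((p0 + r0) * (p2 + r2) + (p2 + r2))"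
proof -
  have "(3 * \<beta>^2 + 3 * \<alpha>^2 + \<alpha> * \<beta> + Y * \<beta> + \<alpha>) * ((p0 + r0) * (p2 + r2) + (p2 + r2))
      = 3 * \<beta>^2 * (p0 * p2) + 3 * \<alpha>^2 * (r0 * r2) + 2 * \<beta>^2 * (r0 * r2) + 2 * \<alpha>^2 * (p0 * p2)
      + \<alpha> * \<beta> * (p2 * r0 + p0 * r2) + Y * \<beta> * p2 + \<alpha> * r2
      + ((3 * \<beta>^2 + 3 * \<alpha>^2) * (p0 * r2 + r0 * p2) + \<beta>^2 * (r0 * r2) + \<alpha>^2 * (p0 * p2)
         + \<alpha> * \<beta> * (p0 * p2 + r0 * r2) + (3 * \<beta>^2 + 3 * \<alpha>^2 + \<alpha> * \<beta>) * (p2 + r2)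
         + Y * \<beta> * ((p0 + r0) * (p2 + r2) + r2) + \<alpha> * ((p0 + r0) * (p2 + r2) + p2))"
    by (simp add: algebra_simps power2_eq_square)
  moreover have "0 \<le> (3 * \<beta>^2 + 3 * \<alpha>^2) * (p0 * r2 + r0 * p2) + \<beta>^2 * (r0 * r2) + \<alpha>^2 * (p0 * p2)
         + \<alpha> * \<beta> * (p0 * p2 + r0 * r2) + (3 * \<beta>^2 + 3 * \<alpha>^2 + \<alpha> * \<beta>) * (p2 + r2)
         + Y * \<beta> * ((p0 + r0) * (p2 + r2) + r2) + \<alpha> * ((p0 + r0) * (p2 + r2) + p2)"
    using assms by simp
  ultimately show ?thesis by linarith
qed

text \<open>Read u0, u1, u2 as the value, half the first and half the second derivative of u along a
  line (likewise v; p, r for the squared norms of the two components, and s = (p' + r') / 2):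
  the two sides are then the second derivatives of \<open>F1_summand\<close> and \<open>c * H_profile\<close>.\<close>

lemma line_hessian_inequality:
  fixes u0 u1 u2 v0 v1 v2 p0 p2 r0 r2 s Y \<alpha> \<beta> c :: real
  assumes cs_u: "u1^2 \<le> u0 * u2" and cs_v: "v1^2 \<le> v0 * v2"
    and u0: "0 \<le> u0" "u0 \<le> \<beta> * p0" and u2: "0 \<le> u2" "u2 \<le> \<beta> * p2"
    and v0: "0 \<le> v0" "v0 \<le> \<alpha> * r0" and v2: "0 \<le> v2" "v2 \<le> \<alpha> * r2"
    and nonneg: "0 \<le> p0" "0 \<le> p2" "0 \<le> r0" "0 \<le> r2" "0 \<le> Y" "0 \<le> \<alpha>" "0 \<le> \<beta>"
    and c: "3 * \<beta>^2 + 3 * \<alpha>^2 + \<alpha> * \<beta> + Y * \<beta> + \<alpha> \<le> c"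
  shows "2 * u1^2 + u0 * u2 + 2 * v1^2 + v0 * v2 + u2 * v0 + 4 * u1 * v1 + u0 * v2 + Y * u2 + v2
    \<le> c * (2 * s^2 + (p0 + r0) * (p2 + r2) + (p2 + r2))"
proof -
  have uu: "u0 * u2 \<le> \<beta>^2 * (p0 * p2)"
    using mult_mono[OF u0(2) u2(2)] u0 u2 nonneg by (simp add: power2_eq_square mult_ac)
  have vv: "v0 * v2 \<le> \<alpha>^2 * (r0 * r2)"
    using mult_mono[OF v0(2) v2(2)] v0 v2 nonneg by (simp add: power2_eq_square mult_ac)
  have uv_sq: "(2 * (u1 * v1))^2 \<le> (2 * \<beta>^2 * (r0 * r2)) * (2 * \<alpha>^2 * (p0 * p2))"
  proof -
    have "(u1 * v1)^2 \<le> (u0 * u2) * (v0 * v2)"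
      unfolding power_mult_distrib using cs_u cs_v u0 u2 by (intro mult_mono) auto
    also have "\<dots> \<le> (\<beta>^2 * (p0 * p2)) * (\<alpha>^2 * (r0 * r2))"
      using u0 u2 v0 v2 nonneg by (intro mult_mono[OF uu vv]) auto
    finally show ?thesis by (simp add: power_mult_distrib algebra_simps)
  qed
  have uv: "4 * u1 * v1 \<le> 2 * \<beta>^2 * (r0 * r2) + 2 * \<alpha>^2 * (p0 * p2)"
    using two_mul_le_add_of_square_le[OF uv_sq] nonneg by simp
  have "u2 * v0 \<le> \<alpha> * \<beta> * (p2 * r0)" "u0 * v2 \<le> \<alpha> * \<beta> * (p0 * r2)"
    using mult_mono[OF u2(2) v0(2)] mult_mono[OF u0(2) v2(2)] u0 u2 v0 v2 nonneg
    by (auto simp: mult_ac)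
  moreover have "Y * u2 \<le> Y * \<beta> * p2" using u2 nonneg by (simp add: mult_left_mono mult.assoc)
  moreover have "0 \<le> 3 * \<beta>^2 + 3 * \<alpha>^2 + \<alpha> * \<beta> + Y * \<beta> + \<alpha>"
    using nonneg by simp
  with c have "0 \<le> c" by linarith
  then have "c * ((p0 + r0) * (p2 + r2) + (p2 + r2)) \<le> c * (2 * s^2 + (p0 + r0) * (p2 + r2) + (p2 + r2))"
    by (simp add: mult_left_mono)
  moreover have "(3 * \<beta>^2 + 3 * \<alpha>^2 + \<alpha> * \<beta> + Y * \<beta> + \<alpha>) * ((p0 + r0) * (p2 + r2) + (p2 + r2))
      \<le> c * ((p0 + r0) * (p2 + r2) + (p2 + r2))"
    using c nonneg by (intro mult_right_mono) auto
  ultimately show ?thesis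
    using hessian_coefficient_bound[OF nonneg] uu vv uv cs_u cs_v v2 by (simp add: algebra_simps)
qed

lemma convex_on_H_profile_minus_F1_summand_comp:
  fixes p r u v p' r' u' v' :: "real \<Rightarrow> real"
  assumes "\<And>t. (p has_real_derivative p' t) (at t)" "\<And>t. (p' has_real_derivative p'') (at t)"
    and "\<And>t. (r has_real_derivative r' t) (at t)" "\<And>t. (r' has_real_derivative r'') (at t)"
    and "\<And>t. (u has_real_derivative u' t) (at t)" "\<And>t. (u' has_real_derivative u'') (at t)"
    and "\<And>t. (v has_real_derivative v' t) (at t)" "\<And>t. (v' has_real_derivative v'') (at t)"
    and "\<And>t. 0 \<le> c * ((p' t + r' t)^2 / 2 + (p t + r t) * (p'' + r'') / 2 + (p'' + r'') / 2)
        - (((u' t)^2 + u t * u'') / 2 + ((v' t)^2 + v t * v'') / 2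
           + (u'' * v t + 2 * u' t * v' t + u t * v'' + Y * u'' + v'') / 2)"
  shows "convex_on UNIV (\<lambda>t. c * H_profile (p t + r t) - F1_summand Y (u t) (v t))"
  unfolding H_profile_def F1_summand_def
proof (rule f''_ge0_imp_convex)
  show "((\<lambda>t. c * ((1/4) * (p t + r t)^2 + (1/2) * (p t + r t))
      - ((1/4) * (u t)^2 + (1/4) * (v t)^2 + (1/2) * (u t * v t + Y * u t + v t + Y))) has_real_derivative
    c * ((p t + r t) * (p' t + r' t) / 2 + (p' t + r' t) / 2)
      - (u t * u' t / 2 + v t * v' t / 2 + (u' t * v t + u t * v' t + Y * u' t + v' t) / 2)) (at t)" for t
    by (rule derivative_eq_intros assms refl | simp add: field_simps)+
  show "((\<lambda>t. c * ((p t + r t) * (p' t + r' t) / 2 + (p' t + r' t) / 2)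
      - (u t * u' t / 2 + v t * v' t / 2 + (u' t * v t + u t * v' t + Y * u' t + v' t) / 2)) has_real_derivative
    c * ((p' t + r' t)^2 / 2 + (p t + r t) * (p'' + r'') / 2 + (p'' + r'') / 2)
      - (((u' t)^2 + u t * u'') / 2 + ((v' t)^2 + v t * v'') / 2
         + (u'' * v t + 2 * u' t * v' t + u t * v'' + Y * u'' + v'') / 2)) (at t)" for t
    by (rule derivative_eq_intros assms refl | simp add: field_simps power2_eq_square)+
qed (use assms in auto)

lemma convex_on_H_profile_minus_F1_summand_line:
  fixes hp hd :: "'a::real_inner" and xp xd :: "'b::real_inner"
    and up ud :: "'c::real_inner" and vp vd :: "'d::real_inner"
  assumes u_le: "\<And>t. norm (up + t *\<^sub>R ud)^2 \<le> \<beta> * norm (hp + t *\<^sub>R hd)^2"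
    and ud_le: "norm ud^2 \<le> \<beta> * norm hd^2"
    and v_le: "\<And>t. norm (vp + t *\<^sub>R vd)^2 \<le> \<alpha> * norm (xp + t *\<^sub>R xd)^2"
    and vd_le: "norm vd^2 \<le> \<alpha> * norm xd^2"
    and nonneg: "0 \<le> Y" "0 \<le> \<alpha>" "0 \<le> \<beta>"
    and c: "3 * \<beta>^2 + 3 * \<alpha>^2 + \<alpha> * \<beta> + Y * \<beta> + \<alpha> \<le> c"
  shows "convex_on UNIV (\<lambda>t. c * H_profile (norm (hp + t *\<^sub>R hd)^2 + norm (xp + t *\<^sub>R xd)^2)
    - F1_summand Y (norm (up + t *\<^sub>R ud)^2) (norm (vp + t *\<^sub>R vd)^2))"
proof (rule convex_on_H_profile_minus_F1_summand_comp[OF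
      has_real_derivative_norm_line DERIV_cmult[OF has_real_derivative_inner_line]
      has_real_derivative_norm_line DERIV_cmult[OF has_real_derivative_inner_line]
      has_real_derivative_norm_line DERIV_cmult[OF has_real_derivative_inner_line]
      has_real_derivative_norm_line DERIV_cmult[OF has_real_derivative_inner_line]])
  fix t :: real
  define sh where "sh = inner (hp + t *\<^sub>R hd) hd"
  define sx where "sx = inner (xp + t *\<^sub>R xd) xd"
  define u1 where "u1 = inner (up + t *\<^sub>R ud) ud"
  define v1 where "v1 = inner (vp + t *\<^sub>R vd) vd"
  have "2 * u1^2 + norm (up + t *\<^sub>R ud)^2 * norm ud^2 + 2 * v1^2 + norm (vp + t *\<^sub>R vd)^2 * norm vd^2
      + norm ud^2 * norm (vp + t *\<^sub>R vd)^2 + 4 * u1 * v1 + norm (up + t *\<^sub>R ud)^2 * norm vd^2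
      + Y * norm ud^2 + norm vd^2
    \<le> c * (2 * (sh + sx)^2 + (norm (hp + t *\<^sub>R hd)^2 + norm (xp + t *\<^sub>R xd)^2) * (norm hd^2 + norm xd^2)
      + (norm hd^2 + norm xd^2))"
    using u_le[of t] ud_le v_le[of t] vd_le nonneg c unfolding u1_def v1_def
    by (intro line_hessian_inequality) (auto simp: Cauchy_Schwarz_ineq power2_norm_eq_inner)
  then show "0 \<le> c * ((2 * inner (hp + t *\<^sub>R hd) hd + 2 * inner (xp + t *\<^sub>R xd) xd)^2 / 2
      + (norm (hp + t *\<^sub>R hd)^2 + norm (xp + t *\<^sub>R xd)^2) * (2 * norm hd^2 + 2 * norm xd^2) / 2
      + (2 * norm hd^2 + 2 * norm xd^2) / 2)
    - (((2 * inner (up + t *\<^sub>R ud) ud)^2 + norm (up + t *\<^sub>R ud)^2 * (2 * norm ud^2)) / 2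
      + ((2 * inner (vp + t *\<^sub>R vd) vd)^2 + norm (vp + t *\<^sub>R vd)^2 * (2 * norm vd^2)) / 2
      + (2 * norm ud^2 * norm (vp + t *\<^sub>R vd)^2
         + 2 * (2 * inner (up + t *\<^sub>R ud) ud) * (2 * inner (vp + t *\<^sub>R vd) vd)
         + norm (up + t *\<^sub>R ud)^2 * (2 * norm vd^2) + Y * (2 * norm ud^2) + 2 * norm vd^2) / 2)"
    unfolding sh_def[symmetric] sx_def[symmetric] u1_def[symmetric] v1_def[symmetric]
    by (simp add: field_simps power2_eq_square)
qed

lemma matrix_row_cvec:
  "(B *v cvec h) $ j = (\<Sum>i\<in>UNIV. B $ j $ i * complex_of_real (h $ i))"
  by (simp add: matrix_vector_mult_def cvec_def)

lemma matrix_row_cvec_line: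
  "(B *v cvec (h + t *\<^sub>R k)) $ j = (B *v cvec h) $ j + t *\<^sub>R (B *v cvec k) $ j"
  by (simp add: matrix_row_cvec scaleR_conv_of_real[where 'a=complex] sum_distrib_left
      sum.distrib[symmetric] algebra_simps)

lemma norm_matrix_row_cvec_le:
  "cmod ((B *v cvec h) $ j)^2 \<le> norm (B $ j)^2 * norm h^2"
proof -
  have "cmod ((B *v cvec h) $ j) \<le> (\<Sum>i\<in>UNIV. cmod (B $ j $ i) * \<bar>h $ i\<bar>)"
    unfolding matrix_row_cvec by (rule order_trans[OF norm_sum]) (simp add: norm_mult)
  also have "\<dots> = inner (\<chi> i. cmod (B $ j $ i)) (\<chi> i. \<bar>h $ i\<bar>)"
    by (simp add: inner_vec_def)
  also have "\<dots> \<le> norm (\<chi> i. cmod (B $ j $ i)) * norm (\<chi> i. \<bar>h $ i\<bar>)"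
    by (rule norm_cauchy_schwarz)
  also have "\<dots> = norm (B $ j) * norm h"
    by (simp add: norm_vec_def)
  finally show ?thesis
    by (simp add: power_mult_distrib[symmetric] power_mono)
qed

lemma F1_eq_sum_F1_summand:
  "F1 B A y z = (\<Sum>j\<in>UNIV. F1_summand (cmod (y $ j)^2)
     (cmod ((B *v cvec (fst z)) $ j)^2) (cmod ((A *v cvec (snd z)) $ j)^2))"
  unfolding F1_def F1_summand_def Let_def
  by (simp add: sum.distrib distrib_left sum_distrib_left norm_mult power_mult_distrib
      flip: power_mult)

lemma Hfun_eq_H_profile: "Hfun z = H_profile (norm (fst z)^2 + norm (snd z)^2)"
  by (simp add: Hfun_def H_profile_def)

lemma convex_on_UNIV_if_convex_on_lines:
  fixes g :: "'a::real_vector \<Rightarrow> real"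
  assumes "\<And>p d. convex_on UNIV (\<lambda>t. g (p + t *\<^sub>R d))"
  shows "convex_on UNIV g"
proof (rule convex_onI)
  fix t :: real and x y :: 'a
  assume "0 < t" "t < 1"
  then have "g (x + ((1 - t) * 0 + t * 1) *\<^sub>R (y - x))
      \<le> (1 - t) * g (x + 0 *\<^sub>R (y - x)) + t * g (x + 1 *\<^sub>R (y - x))"
    using convex_onD[OF assms[of x "y - x"], of t 0 1] by simp
  moreover have "(1 - t) *\<^sub>R x + t *\<^sub>R y = x + t *\<^sub>R (y - x)"
    by (simp add: algebra_simps)
  ultimately show "g ((1 - t) *\<^sub>R x + t *\<^sub>R y) \<le> (1 - t) * g x + t * g y"
    by simp
qed simp

lemma convex_on_sum_functions:
  assumes "finite I" "\<And>i. i \<in> I \<Longrightarrow> convex_on UNIV (f i)"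
  shows "convex_on UNIV (\<lambda>z. \<Sum>i\<in>I. f i z)"
  using assms by (induction I rule: finite_induct) (auto simp: convex_on_const)

text \<open>H is the data-free case \<open>u = v = Y = 0\<close> of the line lemma.\<close>

lemma convex_on_Hfun: "convex_on UNIV (Hfun :: (real^'d1) \<times> (real^'d2) \<Rightarrow> real)"
proof (rule convex_on_UNIV_if_convex_on_lines)
  fix p d :: "(real^'d1) \<times> (real^'d2)"
  have "convex_on UNIV (\<lambda>t. 1 * H_profile (norm (fst p + t *\<^sub>R fst d)^2 + norm (snd p + t *\<^sub>R snd d)^2)
      - F1_summand 0 (norm ((0::real) + t *\<^sub>R 0)^2) (norm ((0::real) + t *\<^sub>R 0)^2))"
    by (rule convex_on_H_profile_minus_F1_summand_line[where \<alpha>=0 and \<beta>=0]) auto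
  then show "convex_on UNIV (\<lambda>t. Hfun (p + t *\<^sub>R d))"
    by (simp add: Hfun_eq_H_profile F1_summand_def)
qed

lemma convex_on_Hfun_minus_F1_summand:
  fixes B :: "complex^'d1^'m" and A :: "complex^'d2^'m" and y :: "complex^'m"
  assumes "3 * norm (B $ j)^4 + 3 * norm (A $ j)^4 + norm (B $ j)^2 * norm (A $ j)^2
      + cmod (y $ j)^2 * norm (B $ j)^2 + norm (A $ j)^2 \<le> c"
  shows "convex_on UNIV (\<lambda>z. c * Hfun z - F1_summand (cmod (y $ j)^2)
    (cmod ((B *v cvec (fst z)) $ j)^2) (cmod ((A *v cvec (snd z)) $ j)^2))"
proof (rule convex_on_UNIV_if_convex_on_lines)
  fix p d :: "(real^'d1) \<times> (real^'d2)"
  have "convex_on UNIV (\<lambda>t. c * H_profile (norm (fst p + t *\<^sub>R fst d)^2 + norm (snd p + t *\<^sub>R snd d)^2)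
      - F1_summand (cmod (y $ j)^2)
          (norm ((B *v cvec (fst p)) $ j + t *\<^sub>R (B *v cvec (fst d)) $ j)^2)
          (norm ((A *v cvec (snd p)) $ j + t *\<^sub>R (A *v cvec (snd d)) $ j)^2))"
  proof (rule convex_on_H_profile_minus_F1_summand_line[where \<beta>="norm (B $ j)^2" and \<alpha>="norm (A $ j)^2"])
    show "norm ((B *v cvec (fst p)) $ j + t *\<^sub>R (B *v cvec (fst d)) $ j)^2
        \<le> norm (B $ j)^2 * norm (fst p + t *\<^sub>R fst d)^2" for t
      using norm_matrix_row_cvec_le by (metis matrix_row_cvec_line)
    show "norm ((A *v cvec (snd p)) $ j + t *\<^sub>R (A *v cvec (snd d)) $ j)^2
        \<le> norm (A $ j)^2 * norm (snd p + t *\<^sub>R snd d)^2" for t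
      using norm_matrix_row_cvec_le by (metis matrix_row_cvec_line)
    show "3 * (norm (B $ j)^2)^2 + 3 * (norm (A $ j)^2)^2 + norm (A $ j)^2 * norm (B $ j)^2
        + cmod (y $ j)^2 * norm (B $ j)^2 + norm (A $ j)^2 \<le> c"
      using assms by (simp add: mult.commute flip: power_mult)
  qed (auto simp: norm_matrix_row_cvec_le)
  then show "convex_on UNIV (\<lambda>t. c * Hfun (p + t *\<^sub>R d) - F1_summand (cmod (y $ j)^2)
      (cmod ((B *v cvec (fst (p + t *\<^sub>R d))) $ j)^2) (cmod ((A *v cvec (snd (p + t *\<^sub>R d))) $ j)^2))"
    by (simp add: Hfun_eq_H_profile matrix_row_cvec_line)
qed

theorem theorem1:
  fixes B :: "complex^'d1^'m" and A :: "complex^'d2^'m" and y :: "complex^'m" and L :: real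
  assumes "L \<ge> (\<Sum>j\<in>UNIV. 3 * norm (B $ j) ^ 4 + 3 * norm (A $ j) ^ 4
              + norm (B $ j) ^ 2 * norm (A $ j) ^ 2 + cmod (y $ j) ^ 2 * norm (B $ j) ^ 2
              + norm (A $ j) ^ 2)"
  shows "convex_on UNIV (\<lambda>z. L * Hfun z - F1 B A y z)"
proof -
  define c where "c j = 3 * norm (B $ j) ^ 4 + 3 * norm (A $ j) ^ 4
    + norm (B $ j) ^ 2 * norm (A $ j) ^ 2 + cmod (y $ j) ^ 2 * norm (B $ j) ^ 2 + norm (A $ j) ^ 2" for j
  define G where "G j z = c j * Hfun z - F1_summand (cmod (y $ j)^2)
    (cmod ((B *v cvec (fst z)) $ j)^2) (cmod ((A *v cvec (snd z)) $ j)^2)" for j z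
  have "L * Hfun z - F1 B A y z = (L - (\<Sum>j\<in>UNIV. c j)) * Hfun z + (\<Sum>j\<in>UNIV. G j z)" for z
    by (simp add: G_def F1_eq_sum_F1_summand sum_subtractf sum_distrib_left sum_distrib_right
        algebra_simps)
  moreover have "convex_on UNIV (\<lambda>z. (L - (\<Sum>j\<in>UNIV. c j)) * Hfun z)"
    using assms convex_on_Hfun unfolding c_def by (intro convex_on_cmul) auto
  moreover have "convex_on UNIV (\<lambda>z. \<Sum>j\<in>UNIV. G j z)"
    unfolding G_def c_def by (intro convex_on_sum_functions convex_on_Hfun_minus_F1_summand) auto
  ultimately show ?thesis
    using convex_on_add[of UNIV "\<lambda>z. (L - (\<Sum>j\<in>UNIV. c j)) * Hfun z" "\<lambda>z. \<Sum>j\<in>UNIV. G j z"]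
    by simp
qed

end
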